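(* Let $a\in\mathcal A_2$ with $|a|=1$, $a\ne\pm1$, be written as $a=\cos\theta+v\,e_1e_2\sin\theta=\exp(\theta\,v\,e_1e_2)$ with $\theta\in(0,\pi)$, $v\in\mathcal A_2^{(0,1)}$, $|v|=1$. Let $\rho_a:\mathcal A_2^{(0,1)}\to\mathcal A_2^{(0,1)}$, $\rho_a(x)=a\,x\,(a')^{-1}$. Then $\rho_a\in\mathrm{SO}(3)$, $v$ is an eigenvector of $\rho_a$ with eigenvalue $1$, and $\rho_a$ is the rotation of angle $2\theta$ about $v$, i.e. its restriction to the orthogonal complement $v^\perp$ is the rotation by angle $2\theta$ with respect to the orientation of $v^\perp$ induced by $v$.
   Context: $\mathcal A_2$ is the real associative algebra generated by $e_1,e_2$ with $e_1^2=e_2^2=-1$, $e_1e_2=-e_2e_1$, with Euclidean norm in the basis $1,e_1,e_2,e_1e_2$. The main involution is $(a_0+a_1e_1+a_2e_2+a_{12}e_1e_2)'=a_0-a_1e_1-a_2e_2+a_{12}e_1e_2$. $\mathcal A_2^{(0,1)}=\mathbb R+\mathbb Re_1+\mathbb Re_2$ is regarded as Euclidean 3-space oriented by the ordered basis $(1,e_1,e_2)$; for a unit vector $v$, the plane $v^\perp$ is oriented so that a basis $(w_1,w_2)$ of $v^\perp$ is positive iff $(v,w_1,w_2)$ is a positive basis of $\mathcal A_2^{(0,1)}$. *)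

theory Defs
  imports "HOL-Analysis.Analysis"
begin

text \<open>The algebra A_2: elements a0 + a1 e1 + a2 e2 + a12 e1e2, stored by their
  coordinates in the basis 1, e1, e2, e1e2.\<close>

datatype A2 = A2 (cmp0: real) (cmp1: real) (cmp2: real) (cmp12: real)

definition A2_add :: "A2 \<Rightarrow> A2 \<Rightarrow> A2" where
  "A2_add a b = A2 (cmp0 a + cmp0 b) (cmp1 a + cmp1 b) (cmp2 a + cmp2 b) (cmp12 a + cmp12 b)"

text \<open>Product determined by e1^2 = e2^2 = -1, e1 e2 = - e2 e1 (bilinear extension).\<close>
definition A2_mult :: "A2 \<Rightarrow> A2 \<Rightarrow> A2" where
  "A2_mult a b = A2
     (cmp0 a * cmp0 b - cmp1 a * cmp1 b - cmp2 a * cmp2 b - cmp12 a * cmp12 b)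
     (cmp0 a * cmp1 b + cmp1 a * cmp0 b + cmp2 a * cmp12 b - cmp12 a * cmp2 b)
     (cmp0 a * cmp2 b - cmp1 a * cmp12 b + cmp2 a * cmp0 b + cmp12 a * cmp1 b)
     (cmp0 a * cmp12 b + cmp1 a * cmp2 b - cmp2 a * cmp1 b + cmp12 a * cmp0 b)"

definition A2_real :: "real \<Rightarrow> A2" where
  "A2_real t = A2 t 0 0 0"

definition A2_one :: A2 where "A2_one = A2_real 1"

definition A2_e12 :: A2 where "A2_e12 = A2 0 0 0 1"

definition A2_neg :: "A2 \<Rightarrow> A2" where
  "A2_neg a = A2 (- cmp0 a) (- cmp1 a) (- cmp2 a) (- cmp12 a)"

definition A2_norm :: "A2 \<Rightarrow> real" where
  "A2_norm a = sqrt ((cmp0 a)\<^sup>2 + (cmp1 a)\<^sup>2 + (cmp2 a)\<^sup>2 + (cmp12 a)\<^sup>2)"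

definition A2_main_inv :: "A2 \<Rightarrow> A2" where
  "A2_main_inv a = A2 (cmp0 a) (- cmp1 a) (- cmp2 a) (cmp12 a)"

definition A2_inverse :: "A2 \<Rightarrow> A2" where
  "A2_inverse a = (THE b. A2_mult a b = A2_one \<and> A2_mult b a = A2_one)"

definition A01 :: "A2 set" where
  "A01 = {b. cmp12 b = 0}"

definition rho :: "A2 \<Rightarrow> A2 \<Rightarrow> A2" where
  "rho a x = A2_mult (A2_mult a x) (A2_inverse (A2_main_inv a))"

definition to3 :: "A2 \<Rightarrow> real^3" where
  "to3 b = vector [cmp0 b, cmp1 b, cmp2 b]"

definition of3 :: "real^3 \<Rightarrow> A2" where
  "of3 x = A2 (x $ 1) (x $ 2) (x $ 3) 0"

definition rho3 :: "A2 \<Rightarrow> real^3 \<Rightarrow> real^3" where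
  "rho3 a x = to3 (rho a (of3 x))"

definition SO3 :: "(real^3 \<Rightarrow> real^3) set" where
  "SO3 = {f. orthogonal_transformation f \<and> det (matrix f) = 1}"

definition positive_basis3 :: "real^3 \<Rightarrow> real^3 \<Rightarrow> real^3 \<Rightarrow> bool" where
  "positive_basis3 u1 u2 u3 \<longleftrightarrow> det (vector [u1, u2, u3] :: real^3^3) > 0"

definition rotation_about :: "(real^3 \<Rightarrow> real^3) \<Rightarrow> real^3 \<Rightarrow> real \<Rightarrow> bool" where
  "rotation_about f v phi \<longleftrightarrow> f v = v \<and>
     (\<forall>w1 w2. w1 \<bullet> v = 0 \<and> w2 \<bullet> v = 0 \<and> norm w1 = 1 \<and> norm w2 = 1 \<and> w1 \<bullet> w2 = 0
        \<and> positive_basis3 v w1 w2 \<longrightarrow>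
        f w1 = cos phi *\<^sub>R w1 + sin phi *\<^sub>R w2 \<and>
        f w2 = (- sin phi) *\<^sub>R w1 + cos phi *\<^sub>R w2)"

end

theory Submission
  imports Defs
begin

text \<open>Identifying \<open>A\<^sub>2\<^sup>(\<^sup>0\<^sup>,\<^sup>1\<^sup>)\<close> with \<open>\<real>\<^sup>3\<close>, the element
  \<open>a = cos \<theta> + v e\<^sub>1e\<^sub>2 sin \<theta>\<close> behaves like the unit quaternion \<open>cos \<theta> + sin \<theta> u\<close>, and a direct
  computation shows that \<open>x \<mapsto> a x (a')\<^sup>-\<^sup>1\<close> is Rodrigues' rotation by \<open>2\<theta>\<close> about \<open>u\<close>:
  \<open>cos 2\<theta> x + sin 2\<theta> (u \<times> x) + (1 - cos 2\<theta>)(u \<bullet> x) u\<close>. That map fixes \<open>u\<close>, preserves inner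
  products, has determinant 1, and for \<open>x \<perp> u\<close> reduces to \<open>cos 2\<theta> x + sin 2\<theta> (u \<times> x)\<close>; a
  positive orthonormal basis \<open>(w\<^sub>1, w\<^sub>2)\<close> of \<open>u\<^sup>\<bottom>\<close> satisfies \<open>w\<^sub>2 = u \<times> w\<^sub>1\<close> and
  \<open>u \<times> w\<^sub>2 = -w\<^sub>1\<close>.\<close>

unbundle cross3_syntax

definition rodrigues_rotation :: "real^3 \<Rightarrow> real \<Rightarrow> real^3 \<Rightarrow> real^3" where
  "rodrigues_rotation u \<phi> x = cos \<phi> *\<^sub>R x + sin \<phi> *\<^sub>R (u \<times> x) + ((1 - cos \<phi>) * (u \<bullet> x)) *\<^sub>R u"

lemma norm_eq_1_vec3: "norm (u :: real^3) = 1 \<longleftrightarrow> (u$1)\<^sup>2 + (u$2)\<^sup>2 + (u$3)\<^sup>2 = 1"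
  by (simp add: norm_eq_1 inner_vec_def sum_3 power2_eq_square)

lemma linear_rodrigues_rotation: "linear (rodrigues_rotation u \<phi>)"
  by (rule linearI)
     (simp_all add: rodrigues_rotation_def cross_add_right cross_mult_right algebra_simps)

lemma inner_rodrigues_rotation:
  assumes "norm u = 1"
  shows "rodrigues_rotation u \<phi> x \<bullet> rodrigues_rotation u \<phi> y = x \<bullet> y"
proof -
  \<comment> \<open>Naming \<open>cos \<phi>\<close> and \<open>sin \<phi>\<close> stops the simplifier from turning \<open>c\<^sup>2 + s\<^sup>2 = 1\<close> into \<open>True\<close>.\<close>
  obtain c s where c: "cos \<phi> = c" and s: "sin \<phi> = s" by blast
  have cs: "c\<^sup>2 + s\<^sup>2 = 1"
    using sin_cos_squared_add2[of \<phi>] by (simp add: c s)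
  show ?thesis
    unfolding rodrigues_rotation_def c s using assms cs
    by (simp add: norm_eq_1_vec3 inner_vec_def sum_3 cross_components) algebra
qed

lemma det_matrix_rodrigues_rotation:
  assumes "norm u = 1"
  shows "det (matrix (rodrigues_rotation u \<phi>)) = 1"
proof -
  obtain c s where c: "cos \<phi> = c" and s: "sin \<phi> = s" by blast
  have cs: "c\<^sup>2 + s\<^sup>2 = 1"
    using sin_cos_squared_add2[of \<phi>] by (simp add: c s)
  show ?thesis
    unfolding det_3 matrix_def rodrigues_rotation_def c s using assms cs
    by (simp add: norm_eq_1_vec3 axis_def cross_components inner_vec_def sum_3) algebra
qed

lemma rodrigues_rotation_in_SO3: "norm u = 1 \<Longrightarrow> rodrigues_rotation u \<phi> \<in> SO3"
  by (simp add: SO3_def orthogonal_transformation_def linear_rodrigues_rotation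
      inner_rodrigues_rotation det_matrix_rodrigues_rotation)

lemma rodrigues_rotation_axis: "norm u = 1 \<Longrightarrow> rodrigues_rotation u \<phi> u = u"
  by (simp add: rodrigues_rotation_def norm_eq_1 algebra_simps)

lemma rodrigues_rotation_orthogonal:
  "u \<bullet> x = 0 \<Longrightarrow> rodrigues_rotation u \<phi> x = cos \<phi> *\<^sub>R x + sin \<phi> *\<^sub>R (u \<times> x)"
  by (simp add: rodrigues_rotation_def)

lemma positive_orthonormal_basis_cross:
  assumes "norm u = 1" "norm w1 = 1" "norm w2 = 1"
    and "w1 \<bullet> u = 0" "w2 \<bullet> u = 0" "w1 \<bullet> w2 = 0"
    and "positive_basis3 u w1 w2"
  shows "w2 = u \<times> w1"
proof -
  let ?M = "vector [u, w1, w2] :: real^3^3"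
  have "orthogonal_matrix ?M"
    using assms by (auto simp: orthogonal_matrix_orthonormal_rows forall_3 row_def
        orthogonal_def inner_commute)
  then have "det ?M = 1"
    using assms(7) det_orthogonal_matrix[of ?M] by (auto simp: positive_basis3_def)
  then have "(u \<times> w1) \<bullet> w2 = 1"
    by (metis dot_cross_det cross_triple inner_commute)
  moreover have "norm (u \<times> w1) ^ 2 = 1"
    using norm_cross[of u w1] assms by (simp add: inner_commute)
  ultimately have "norm (w2 - u \<times> w1) ^ 2 = 0"
    using assms(3) by (simp add: power2_norm_eq_inner inner_diff inner_commute norm_eq_1)
  then show ?thesis
    by simp
qed

lemma rotation_about_rodrigues_rotation:
  assumes "norm u = 1"
  shows "rotation_about (rodrigues_rotation u \<phi>) u \<phi>"
  unfolding rotation_about_def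
proof (intro conjI allI impI)
  show "rodrigues_rotation u \<phi> u = u"
    using assms by (rule rodrigues_rotation_axis)
  fix w1 w2
  assume basis: "w1 \<bullet> u = 0 \<and> w2 \<bullet> u = 0 \<and> norm w1 = 1 \<and> norm w2 = 1 \<and> w1 \<bullet> w2 = 0
    \<and> positive_basis3 u w1 w2"
  then have w2: "w2 = u \<times> w1"
    using positive_orthonormal_basis_cross assms by blast
  have "u \<times> w2 = - w1"
    using basis assms by (simp add: w2 Lagrange norm_eq_1 inner_commute)
  then show "rodrigues_rotation u \<phi> w1 = cos \<phi> *\<^sub>R w1 + sin \<phi> *\<^sub>R w2"
    and "rodrigues_rotation u \<phi> w2 = (- sin \<phi>) *\<^sub>R w1 + cos \<phi> *\<^sub>R w2"
    using basis by (simp_all add: rodrigues_rotation_orthogonal w2 inner_commute algebra_simps)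
qed

lemma A2_mult_assoc: "A2_mult (A2_mult a b) c = A2_mult a (A2_mult b c)"
  by (simp add: A2_mult_def algebra_simps)

lemma A2_mult_one_left [simp]: "A2_mult A2_one a = a"
  and A2_mult_one_right [simp]: "A2_mult a A2_one = a"
  by (simp_all add: A2_mult_def A2_one_def A2_real_def)

lemma A2_inverse_eqI:
  assumes right: "A2_mult a b = A2_one" and left: "A2_mult b a = A2_one"
  shows "A2_inverse a = b"
  unfolding A2_inverse_def
proof (rule the_equality)
  fix b' assume "A2_mult a b' = A2_one \<and> A2_mult b' a = A2_one"
  then have "A2_mult b' a = A2_one" ..
  have "b' = A2_mult b' (A2_mult a b)"
    by (simp add: right)
  also have "\<dots> = b"
    by (simp add: A2_mult_assoc [symmetric] \<open>A2_mult b' a = A2_one\<close>)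
  finally show "b' = b" .
qed (use right left in simp)

lemma A2_norm_eq_1_iff:
  "A2_norm a = 1 \<longleftrightarrow> (cmp0 a)\<^sup>2 + (cmp1 a)\<^sup>2 + (cmp2 a)\<^sup>2 + (cmp12 a)\<^sup>2 = 1"
  by (simp add: A2_norm_def)

lemma A2_inverse_unit:
  assumes "A2_norm a = 1"
  shows "A2_inverse a = A2 (cmp0 a) (- cmp1 a) (- cmp2 a) (- cmp12 a)"
  using assms by (intro A2_inverse_eqI)
    (simp_all add: A2_norm_eq_1_iff A2_mult_def A2_one_def A2_real_def power2_eq_square
      algebra_simps)

lemma to3_of3 [simp]: "to3 (of3 x) = x"
  by (simp add: to3_def of3_def vec_eq_iff forall_3)

lemma of3_to3: "x \<in> A01 \<Longrightarrow> of3 (to3 x) = x"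
  by (cases x) (simp add: A01_def to3_def of3_def)

lemma of3_in_A01 [simp]: "of3 x \<in> A01"
  by (simp add: A01_def of3_def)

lemma A2_norm_of3: "A2_norm (of3 x) = norm x"
  by (simp add: A2_norm_def of3_def norm_eq_sqrt_inner inner_vec_def sum_3 power2_eq_square)

lemma rho_exp_of3:
  assumes "norm u = 1"
    and a: "a = A2_add (A2_real (cos \<theta>)) (A2_mult (A2_mult (of3 u) A2_e12) (A2_real (sin \<theta>)))"
  shows "rho a (of3 x) = of3 (rodrigues_rotation u (2 * \<theta>) x)"
proof -
  obtain c s where c: "cos \<theta> = c" and s: "sin \<theta> = s" by blast
  have cs: "c\<^sup>2 + s\<^sup>2 = 1"
    using sin_cos_squared_add2[of \<theta>] by (simp add: c s)
  have a_eq: "a = A2 c (s * u$3) (- (s * u$2)) (s * u$1)"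
    by (simp add: a c s A2_add_def A2_real_def A2_mult_def A2_e12_def of3_def)
  have "A2_norm (A2_main_inv a) = 1"
    using assms(1) cs by (simp add: norm_eq_1_vec3 A2_norm_eq_1_iff a_eq A2_main_inv_def) algebra
  then have inv: "A2_inverse (A2_main_inv a) = A2 c (s * u$3) (- (s * u$2)) (- (s * u$1))"
    by (simp add: A2_inverse_unit a_eq A2_main_inv_def)
  have double: "cos (2 * \<theta>) = c\<^sup>2 - s\<^sup>2" "sin (2 * \<theta>) = 2 * s * c"
    by (simp_all add: c s cos_double sin_double)
  show ?thesis
    unfolding rho_def inv unfolding a_eq rodrigues_rotation_def double using assms(1) cs
    by (simp add: norm_eq_1_vec3 A2_mult_def of3_def cross_components inner_vec_def sum_3)
      algebra
qed

theorem proposition4p3: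
  fixes a v :: A2 and \<theta> :: real
  assumes "A2_norm a = 1" and "a \<noteq> A2_one" and "a \<noteq> A2_neg A2_one"
    and "0 < \<theta>" and "\<theta> < pi"
    and "v \<in> A01" and "A2_norm v = 1"
    and "a = A2_add (A2_real (cos \<theta>)) (A2_mult (A2_mult v A2_e12) (A2_real (sin \<theta>)))"
  shows "(\<forall>x\<in>A01. rho a x \<in> A01)
    \<and> rho3 a \<in> SO3
    \<and> v \<noteq> A2_real 0 \<and> rho a v = v
    \<and> rotation_about (rho3 a) (to3 v) (2 * \<theta>)"
proof -
  define u where "u = to3 v"
  have v: "v = of3 u"
    using assms(6) by (simp add: u_def of3_to3)
  have u: "norm u = 1"
    using assms(7) by (simp add: v A2_norm_of3)
  have rho: "rho a (of3 x) = of3 (rodrigues_rotation u (2 * \<theta>) x)" for x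
    using rho_exp_of3[OF u] assms(8) by (simp add: v)
  have rho3: "rho3 a = rodrigues_rotation u (2 * \<theta>)"
    by (simp add: rho3_def rho fun_eq_iff)
  show ?thesis
  proof (intro conjI ballI)
    show "rho a x \<in> A01" if "x \<in> A01" for x
      using that by (metis of3_to3 rho of3_in_A01)
    show "v \<noteq> A2_real 0"
      using assms(7) by (auto simp: A2_norm_def A2_real_def)
    show "rho a v = v"
      by (simp add: v rho rodrigues_rotation_axis u)
  qed (simp_all add: rho3 rodrigues_rotation_in_SO3 rotation_about_rodrigues_rotation u
        flip: u_def)
qed

end
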